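(* For all integers $d,n$ with $d\geq 3$ and $n\geq\binom{d+2}{2}-1$ there are constants $c_4=c_4(n,d)>0$ and $c_5=c_5(n,d)>0$ with the following property. Let $A\subseteq\mathbb{R}^2$ be finite such that every subset $B\subseteq A$ with $|B|=n$ is contained in at most one curve of degree $d$. If $|A|>c_4$ and $A$ is not contained in any curve of degree $d$, then \[ \left|\mathcal{O}_{d,2n+1-\binom{d+2}{2}}(A)\right|\geq c_5|A|^{\binom{d+2}{2}-3}. \]
   Context: A curve of degree $d$ is a subset of $\mathbb{R}^2$ equal to the zero set of a polynomial in $\mathbb{R}[x,y]$ of degree exactly $d$; $\mathcal{C}_d$ denotes the family of curves of degree $d$. For $A\subseteq\mathbb{R}^2$, a curve $C_1\in\mathcal{C}_d$ is determined by $A$ if for every $C_2\in\mathcal{C}_d$ with $C_2\cap A\supseteq C_1\cap A$ we have $C_1=C_2$; $\mathcal{D}_d(A)$ is the family of curves of degree $d$ determined by $A$. For $n\in\mathbb{R}$, $\mathcal{O}_{d,n}(A):=\{C\in\mathcal{D}_d(A): |C\cap A|\le n\}$. *)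

theory Defs
  imports Complex_Main
begin

text \<open>Bivariate real polynomials are represented by coefficient functions
  c :: nat => nat => real, c i j being the coefficient of x^i y^j.\<close>

definition bipoly_eval :: "nat \<Rightarrow> (nat \<Rightarrow> nat \<Rightarrow> real) \<Rightarrow> real \<times> real \<Rightarrow> real" where
  "bipoly_eval d c p = (\<Sum>i\<le>d. \<Sum>j\<le>d. c i j * fst p ^ i * snd p ^ j)"

definition has_degree :: "nat \<Rightarrow> (nat \<Rightarrow> nat \<Rightarrow> real) \<Rightarrow> bool" where
  "has_degree d c \<longleftrightarrow> (\<forall>i j. d < i + j \<longrightarrow> c i j = 0) \<and> (\<exists>i j. i + j = d \<and> c i j \<noteq> 0)"

definition is_curve :: "nat \<Rightarrow> (real \<times> real) set \<Rightarrow> bool" where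
  "is_curve d C \<longleftrightarrow> (\<exists>c. has_degree d c \<and> C = {p. bipoly_eval d c p = 0})"

definition determined :: "nat \<Rightarrow> (real \<times> real) set \<Rightarrow> (real \<times> real) set \<Rightarrow> bool" where
  "determined d A C \<longleftrightarrow> is_curve d C \<and>
     (\<forall>C2. is_curve d C2 \<and> C2 \<inter> A \<supseteq> C \<inter> A \<longrightarrow> C = C2)"

definition ordinary_curves :: "nat \<Rightarrow> real \<Rightarrow> (real \<times> real) set \<Rightarrow> (real \<times> real) set set" where
  "ordinary_curves d n A = {C. determined d A C \<and> real (card (C \<inter> A)) \<le> n}"

end

theory Submission
  imports Defs "HOL-Library.Function_Algebras"
begin

(*
  Polynomials of degree at most d in two variables form a space of dimension N = C(d+2, 2).
  Under the hypothesis, a nonzero polynomial of degree below d vanishes at fewer than n points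
  of A (its zero set lies on two different curves of degree d), and so do all members of a
  pencil (a two-dimensional subspace) simultaneously.  Hence N - 3 points of A can be chosen one
  after another, in at least (|A| - 2(n - 1))^(N-3) ways, each imposing an independent condition on
  the polynomials of degree at most d as well as on those of degree below d.  The polynomials
  vanishing at the chosen points T then form a net of curves of exact degree d.  Regarding the
  remaining points of A as points of the projective plane dual to the net, the Sylvester-Gallai
  theorem yields a member C of the net through two of them, x and y, such that every other point
  of A on C lies in the base locus of the pencil through T and x or of the one through T and y.
  Such a C is determined by A and meets A in at most 2(n - 1) - (N - 3) points, and it contains
  at most (2n + 1 - N)^(N-3) of the chosen sequences.
*)

instantiation "fun" :: (type, real_vector) real_vector
begin
definition scaleR_fun :: "real \<Rightarrow> ('a \<Rightarrow> 'b) \<Rightarrow> 'a \<Rightarrow> 'b" where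
  "scaleR_fun r f = (\<lambda>x. r *\<^sub>R f x)"
instance by standard (auto simp: scaleR_fun_def fun_eq_iff algebra_simps)
end

lemma scaleR_fun_apply [simp]: "(r *\<^sub>R f) x = r *\<^sub>R f x"
  by (simp add: scaleR_fun_def)

lemma dim_subset_finite_span:
  fixes S T :: "'a::real_vector set"
  assumes "S \<subseteq> T" "T \<subseteq> span W" "finite W"
  shows "dim S \<le> dim T"
proof -
  obtain B where B: "B \<subseteq> S" "independent B" "S \<subseteq> span B" "card B = dim S"
    using basis_exists by blast
  obtain BT where BT: "BT \<subseteq> T" "independent BT" "T \<subseteq> span BT" "card BT = dim T"
    using basis_exists by blast
  have "BT \<subseteq> span W" using BT(1) assms(2) by blast
  then have "finite BT" using independent_span_bound[OF assms(3) BT(2)] by blast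
  have "B \<subseteq> span BT" using B(1) assms(1) BT(3) by blast
  then show ?thesis using independent_span_bound[OF \<open>finite BT\<close> B(2)] B(4) BT(4) by simp
qed

lemma dim_kernel_on_subspace:
  fixes W :: "'a::real_vector set" and \<phi> :: "'a \<Rightarrow> real"
  assumes W: "subspace W" "W \<subseteq> span W0" "finite W0"
    and \<phi>: "linear \<phi>" and g: "g \<in> W" "\<phi> g \<noteq> 0"
  shows "dim W = dim {x\<in>W. \<phi> x = 0} + 1"
proof -
  let ?K = "{x\<in>W. \<phi> x = 0}"
  have "subspace ?K"
    using W(1) by (auto simp: subspace_def linear_add[OF \<phi>] linear_scale[OF \<phi>] linear_0[OF \<phi>])
  obtain B where B: "B \<subseteq> ?K" "independent B" "?K \<subseteq> span B" "card B = dim ?K"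
    using basis_exists by blast
  have "finite B" using independent_span_bound[OF W(3) B(2)] B(1) W(2) by blast
  have "span B \<subseteq> ?K" using B(1) \<open>subspace ?K\<close> by (rule span_minimal)
  then have gB: "g \<notin> span B" using g by auto
  have "W \<subseteq> span (insert g B)"
  proof
    fix x assume x: "x \<in> W"
    let ?y = "x - (\<phi> x / \<phi> g) *\<^sub>R g"
    have "?y \<in> ?K"
      using x g W(1) by (simp add: subspace_diff subspace_scale linear_diff[OF \<phi>] linear_scale[OF \<phi>])
    then have "?y \<in> span (insert g B)" using B(3) span_mono[of B "insert g B"] by blast
    moreover have "(\<phi> x / \<phi> g) *\<^sub>R g \<in> span (insert g B)" by (simp add: span_base span_scale)
    ultimately have "?y + (\<phi> x / \<phi> g) *\<^sub>R g \<in> span (insert g B)" by (rule span_add)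
    then show "x \<in> span (insert g B)" by simp
  qed
  moreover have "insert g B \<subseteq> W" using B(1) g by auto
  ultimately have "dim W = card (insert g B)"
    using B(2) gB by (intro basis_card_eq_dim[symmetric]) (auto simp: independent_insert)
  also have "\<dots> = dim ?K + 1"
  proof -
    have "g \<notin> B" using gB span_base by blast
    then show ?thesis using \<open>finite B\<close> B(4) by simp
  qed
  finally show ?thesis .
qed

lemma dim_ge_2_obtain:
  fixes V :: "'a::real_vector set"
  assumes "2 \<le> dim V"
  obtains f g where "f \<in> V" "g \<in> V" "f \<noteq> 0" "g \<notin> span {f}"
proof -
  obtain B where B: "B \<subseteq> V" "independent B" "V \<subseteq> span B" "card B = dim V"
    using basis_exists by blast
  with assms have "finite B" "\<not> card B \<le> Suc 0" by (auto intro: card_ge_0_finite)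
  then obtain f g where fg: "f \<in> B" "g \<in> B" "f \<noteq> g"
    using card_le_Suc0_iff_eq by blast
  have "f \<noteq> 0" using B(2) fg(1) dependent_zero by blast
  moreover have "g \<notin> span (B - {g})" using B(2) fg(2) by (simp add: dependent_def)
  then have "g \<notin> span {f}" using fg span_mono[of "{f}" "B - {g}"] by blast
  ultimately show ?thesis using that fg B(1) by blast
qed

lemma dim_3_basis_containing:
  fixes V :: "'a::real_vector set"
  assumes "dim V = 3" "f \<in> V" "f \<noteq> 0"
  obtains f1 f2 where "f1 \<in> V" "f2 \<in> V"
    "\<And>c. c \<in> V \<Longrightarrow> \<exists>a1 a2 a3. c = a1 *\<^sub>R f1 + a2 *\<^sub>R f2 + a3 *\<^sub>R f"
    "\<And>a1 a2 a3. a1 *\<^sub>R f1 + a2 *\<^sub>R f2 + a3 *\<^sub>R f = 0 \<Longrightarrow> a1 = 0 \<and> a2 = 0 \<and> a3 = 0"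
proof -
  obtain B where B: "{f} \<subseteq> B" "B \<subseteq> V" "independent B" "V \<subseteq> span B"
    using maximal_independent_subset_extend[of "{f}" V] assms(2,3) by auto
  have "card B = 3" using basis_card_eq_dim[OF B(2,4,3)] assms(1) by simp
  then have "card (B - {f}) = 2" using B(1) by (simp add: card_Diff_singleton_if)
  then obtain f1 f2 where "B - {f} = {f1, f2}" "f1 \<noteq> f2" by (auto simp: card_2_iff)
  then have f12: "B = {f1, f2, f}" "f1 \<noteq> f2" "f1 \<noteq> f" "f2 \<noteq> f" using B(1) by auto
  have "finite B" using f12 by simp
  have span: "\<exists>a1 a2 a3. c = a1 *\<^sub>R f1 + a2 *\<^sub>R f2 + a3 *\<^sub>R f" if "c \<in> V" for c
  proof -
    have "c \<in> span B" using that B(4) by blast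
    then obtain u where "c = (\<Sum>v\<in>B. u v *\<^sub>R v)"
      using span_finite[OF \<open>finite B\<close>] by auto
    then have "c = u f1 *\<^sub>R f1 + u f2 *\<^sub>R f2 + u f *\<^sub>R f" using f12 by (simp add: algebra_simps)
    then show ?thesis by blast
  qed
  have indep: "a1 = 0 \<and> a2 = 0 \<and> a3 = 0" if "a1 *\<^sub>R f1 + a2 *\<^sub>R f2 + a3 *\<^sub>R f = 0" for a1 a2 a3
  proof -
    define u where "u v = (if v = f1 then a1 else if v = f2 then a2 else a3)" for v
    have "(\<Sum>v\<in>B. u v *\<^sub>R v) = 0" using that f12 by (simp add: u_def algebra_simps)
    then have "\<forall>v\<in>B. u v = 0" using B(3) dependent_finite[OF \<open>finite B\<close>] by blast
    then show ?thesis using f12 by (auto simp: u_def)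
  qed
  show ?thesis using that span indep B(2) f12(1) by auto
qed

lemma ex_nonvanishing_on_finite:
  fixes V :: "'a::real_vector set" and \<phi> :: "'p \<Rightarrow> 'a \<Rightarrow> real"
  assumes V: "subspace V" and "finite X" and \<phi>: "\<And>x. linear (\<phi> x)"
    and "\<And>x. x \<in> X \<Longrightarrow> \<exists>g\<in>V. \<phi> x g \<noteq> 0"
  shows "\<exists>f\<in>V. \<forall>x\<in>X. \<phi> x f \<noteq> 0"
  using assms(2,4)
proof (induct X rule: finite_induct)
  case empty
  then show ?case using subspace_0[OF V] by blast
next
  case (insert x X)
  then obtain f where f: "f \<in> V" "\<forall>y\<in>X. \<phi> y f \<noteq> 0" by blast
  obtain g where g: "g \<in> V" "\<phi> x g \<noteq> 0" using insert.prems by blast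
  \<comment> \<open>\<open>f + s g\<close> works unless \<open>s\<close> is one of finitely many roots\<close>
  have "finite ((\<lambda>y. - \<phi> y f / \<phi> y g) ` insert x X)" using insert.hyps(1) by simp
  then obtain s :: real where s: "s \<notin> (\<lambda>y. - \<phi> y f / \<phi> y g) ` insert x X"
    using ex_new_if_finite[OF infinite_UNIV_char_0] by blast
  have "\<phi> y (f + s *\<^sub>R g) \<noteq> 0" if "y \<in> insert x X" for y
  proof (cases "\<phi> y g = 0")
    case True
    then show ?thesis using that f(2) g(2) by (auto simp: linear_add[OF \<phi>] linear_scale[OF \<phi>])
  next
    case False
    then have "s \<noteq> - \<phi> y f / \<phi> y g" using s that by blast
    then show ?thesis using False by (auto simp: linear_add[OF \<phi>] linear_scale[OF \<phi>] field_simps)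
  qed
  moreover have "f + s *\<^sub>R g \<in> V" using f(1) g(1) V by (simp add: subspace_add subspace_scale)
  ultimately show ?case by blast
qed

lemma subset_0_imp_dim_eq_0: "V \<subseteq> {0} \<Longrightarrow> dim V = 0"
  using dim_le_card[of V "{}"] by simp

lemma dim_eq_0_imp_subset_0:
  fixes V :: "'a::real_vector set"
  assumes "dim V = 0" "V \<subseteq> span W" "finite W"
  shows "V \<subseteq> {0}"
proof -
  obtain B where B: "B \<subseteq> V" "independent B" "V \<subseteq> span B" "card B = dim V"
    using basis_exists by blast
  have "finite B" using independent_span_bound[OF assms(3) B(2)] B(1) assms(2) by blast
  then have "B = {}" using B(4) assms(1) by simp
  then show ?thesis using B(3) by simp
qed

lemma card_covered_by_two_sets:
  assumes "finite G1" "finite G2" "C \<subseteq> G1 \<union> G2" "T \<subseteq> G1 \<inter> G2"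
  shows "card C + card T \<le> card G1 + card G2"
proof -
  have "card C + card (G1 \<inter> G2) \<le> card (G1 \<union> G2) + card (G1 \<inter> G2)"
    using card_mono[OF _ assms(3)] assms(1,2) by simp
  also have "\<dots> = card G1 + card G2" using card_Un_Int[OF assms(1,2)] by simp
  finally show ?thesis using card_mono[OF _ assms(4)] assms(1) by fastforce
qed

lemma card_lists_ge_power:
  fixes P :: "'a list \<Rightarrow> bool"
  assumes "finite A" "\<And>xs. P xs \<Longrightarrow> set xs \<subseteq> A" "P []"
    and ext: "\<And>xs. P xs \<Longrightarrow> length xs < L \<Longrightarrow> m \<le> card {p. P (p # xs)}"
  shows "k \<le> L \<Longrightarrow> m ^ k \<le> card {xs. P xs \<and> length xs = k}"
proof (induct k)
  case 0
  have "{xs. P xs \<and> length xs = 0} = {[]}" using assms(3) by auto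
  then show ?case by simp
next
  case (Suc k)
  let ?G = "\<lambda>k. {xs. P xs \<and> length xs = k}"
  have fin: "finite (?G k)" for k
    by (rule finite_subset[OF _ finite_lists_length_eq[OF assms(1), of k]]) (auto dest: assms(2))
  have fin_ext: "finite {p. P (p # xs)}" for xs
    by (rule finite_subset[OF _ assms(1)]) (auto dest: assms(2))
  have "m ^ Suc k \<le> card (?G k) * m" using Suc by (simp add: mult.commute)
  also have "\<dots> \<le> (\<Sum>xs\<in>?G k. card {p. P (p # xs)})"
    using ext Suc.prems by (intro sum_bounded_below[of _ m, simplified]) auto
  also have "\<dots> = card (Sigma (?G k) (\<lambda>xs. {p. P (p # xs)}))"
    using fin fin_ext by (simp add: card_SigmaI)
  also have "\<dots> = card ((\<lambda>(xs, p). p # xs) ` Sigma (?G k) (\<lambda>xs. {p. P (p # xs)}))"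
    by (rule card_image[symmetric]) (auto simp: inj_on_def)
  also have "\<dots> \<le> card (?G (Suc k))"
    by (rule card_mono[OF fin]) auto
  finally show ?case .
qed

lemma card_lists_in_some_le:
  fixes F :: "'a set set"
  assumes "finite F" "\<And>C. C \<in> F \<Longrightarrow> finite C \<and> card C \<le> K"
    and "\<And>xs. xs \<in> S \<Longrightarrow> length xs = L \<and> (\<exists>C\<in>F. set xs \<subseteq> C)"
  shows "card S \<le> card F * K ^ L"
proof -
  have fin: "finite {xs. set xs \<subseteq> C \<and> length xs = L}" if "C \<in> F" for C
    using finite_lists_length_eq[of C L] assms(2)[OF that] by simp
  have "S \<subseteq> (\<Union>C\<in>F. {xs. set xs \<subseteq> C \<and> length xs = L})" using assms(3) by blast
  then have "card S \<le> card (\<Union>C\<in>F. {xs. set xs \<subseteq> C \<and> length xs = L})"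
    by (rule card_mono[rotated]) (use assms(1) fin in blast)
  also have "\<dots> \<le> (\<Sum>C\<in>F. card {xs. set xs \<subseteq> C \<and> length xs = L})"
    by (rule card_UN_le[OF assms(1)])
  also have "\<dots> \<le> (\<Sum>C\<in>F. K ^ L)"
    using assms(2) by (intro sum_mono) (simp add: card_lists_length_eq power_mono)
  finally show ?thesis by simp
qed

section \<open>The Sylvester--Gallai theorem\<close>

definition det3 :: "real \<times> real \<Rightarrow> real \<times> real \<Rightarrow> real \<times> real \<Rightarrow> real" where
  "det3 a b c = (fst b - fst a) * (snd c - snd a) - (snd b - snd a) * (fst c - fst a)"

definition sq_dist :: "real \<times> real \<Rightarrow> real \<times> real \<Rightarrow> real" where
  "sq_dist a b = (fst b - fst a)\<^sup>2 + (snd b - snd a)\<^sup>2"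

definition sq_dist_to_line :: "real \<times> real \<Rightarrow> real \<times> real \<Rightarrow> real \<times> real \<Rightarrow> real" where
  "sq_dist_to_line a b c = (det3 a b c)\<^sup>2 / sq_dist a b"

lemma sq_dist_pos: "a \<noteq> b \<Longrightarrow> sq_dist a b > 0"
  by (auto simp: sq_dist_def prod_eq_iff sum_power2_gt_zero_iff)

lemma det3_degenerate [simp]: "det3 a a c = 0" "det3 a b a = 0" "det3 a b b = 0"
  by (simp_all add: det3_def)

lemma det3_eq_0_imp_on_line:
  assumes "a \<noteq> b" "det3 a b c = 0"
  defines "t \<equiv> ((fst c - fst a) * (fst b - fst a) + (snd c - snd a) * (snd b - snd a)) / sq_dist a b"
  shows "c = (fst a + t * (fst b - fst a), snd a + t * (snd b - snd a))"
proof -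
  define u1 u2 where "u1 = fst b - fst a" and "u2 = snd b - snd a"
  define X Y where "X = fst c - fst a" and "Y = snd c - snd a"
  have L: "u1\<^sup>2 + u2\<^sup>2 \<noteq> 0"
    using sq_dist_pos[OF assms(1)] unfolding sq_dist_def u1_def u2_def by linarith
  have det: "u1 * Y = u2 * X" using assms(2) by (simp add: det3_def u1_def u2_def X_def Y_def)
  have "X * (u1\<^sup>2 + u2\<^sup>2) = (X * u1 + Y * u2) * u1" "Y * (u1\<^sup>2 + u2\<^sup>2) = (X * u1 + Y * u2) * u2"
    using det by algebra+
  then have "X = t * u1" "Y = t * u2"
    using L by (simp_all add: t_def sq_dist_def u1_def u2_def X_def Y_def field_simps)
  then show ?thesis by (simp add: prod_eq_iff u1_def u2_def X_def Y_def)
qed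

text \<open>Kelly's step: \<open>s0\<close> is the parameter of the foot of the perpendicular from \<open>p\<close> to the line
  \<open>ab\<close>; if the point with parameter \<open>sx\<close> lies between that foot and the point with parameter
  \<open>sz\<close>, it is closer to the line through \<open>p\<close> and the latter than \<open>p\<close> is to \<open>ab\<close>.\<close>

lemma sq_dist_to_line_decreases:
  fixes a b p :: "real \<times> real" and s0 sx sz :: real
  defines "pt s \<equiv> (fst a + s * (fst b - fst a), snd a + s * (snd b - snd a))"
  assumes "a \<noteq> b" "det3 a b p \<noteq> 0"
    and s0: "s0 = ((fst p - fst a) * (fst b - fst a) + (snd p - snd a) * (snd b - snd a)) / sq_dist a b"
    and "\<bar>sx - sz\<bar> \<le> \<bar>sz - s0\<bar>" "sx \<noteq> sz"
  shows "det3 p (pt sz) (pt sx) \<noteq> 0"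
    and "sq_dist_to_line p (pt sz) (pt sx) < sq_dist_to_line a b p"
proof -
  define L D where "L = sq_dist a b" and "D = det3 a b p"
  have L: "L > 0" using sq_dist_pos[OF assms(2)] by (simp add: L_def)
  have D2: "D\<^sup>2 > 0" using assms(3) by (simp add: D_def)
  have det: "det3 p (pt sz) (pt sx) = (sx - sz) * D"
    unfolding pt_def D_def det3_def by simp algebra
  have "sq_dist p (pt sz) * L
      = (L * sz - ((fst p - fst a) * (fst b - fst a) + (snd p - snd a) * (snd b - snd a)))\<^sup>2 + D\<^sup>2"
    unfolding pt_def L_def D_def sq_dist_def det3_def by simp algebra
  also have "L * sz - ((fst p - fst a) * (fst b - fst a) + (snd p - snd a) * (snd b - snd a))
      = L * (sz - s0)"
    using L s0 by (simp add: L_def field_simps)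
  finally have q: "sq_dist p (pt sz) * L = L\<^sup>2 * (sz - s0)\<^sup>2 + D\<^sup>2"
    by (simp add: power_mult_distrib)
  then have "sq_dist p (pt sz) * L > 0" using D2 by (simp add: add_nonneg_pos)
  then have qpos: "sq_dist p (pt sz) > 0" using L by (simp add: zero_less_mult_iff)
  have "(sx - sz)\<^sup>2 \<le> (sz - s0)\<^sup>2" using assms(5) by (simp add: abs_le_square_iff)
  then have "(det3 p (pt sz) (pt sx))\<^sup>2 * L \<le> (sz - s0)\<^sup>2 * D\<^sup>2 * L"
    using L D2 by (simp add: det power_mult_distrib)
  also have "\<dots> < D\<^sup>2 * sq_dist p (pt sz)"
  proof -
    have "D\<^sup>2 * sq_dist p (pt sz) = D\<^sup>2 * (sq_dist p (pt sz) * L) / L" using L by simp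
    also have "\<dots> = (sz - s0)\<^sup>2 * D\<^sup>2 * L + D\<^sup>2 * D\<^sup>2 / L"
      unfolding q using L by (simp add: field_simps power2_eq_square)
    finally have "D\<^sup>2 * sq_dist p (pt sz) = (sz - s0)\<^sup>2 * D\<^sup>2 * L + D\<^sup>2 * D\<^sup>2 / L" .
    then show ?thesis using D2 L by simp
  qed
  finally show "sq_dist_to_line p (pt sz) (pt sx) < sq_dist_to_line a b p"
    using L qpos by (simp add: sq_dist_to_line_def L_def D_def field_simps)
  show "det3 p (pt sz) (pt sx) \<noteq> 0" using det assms(6) D2 by auto
qed

lemma two_on_same_side:
  fixes r1 r2 r3 s :: real
  assumes "r1 \<noteq> r2" "r2 \<noteq> r3" "r1 \<noteq> r3"
  shows "\<exists>x\<in>{r1, r2, r3}. \<exists>z\<in>{r1, r2, r3}. x \<noteq> z \<and> \<bar>x - z\<bar> \<le> \<bar>z - s\<bar>"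
proof -
  have pair: "\<exists>x\<in>{a, b}. \<exists>z\<in>{a, b}. x \<noteq> z \<and> \<bar>x - z\<bar> \<le> \<bar>z - s\<bar>"
    if "a \<noteq> b" "(s \<le> a \<and> s \<le> b) \<or> (a \<le> s \<and> b \<le> s)" for a b :: real
    using that by (cases "\<bar>a - s\<bar> \<le> \<bar>b - s\<bar>") (auto intro!: bexI[of _ a] bexI[of _ b])
  consider "(s \<le> r1 \<and> s \<le> r2) \<or> (r1 \<le> s \<and> r2 \<le> s)" | "(s \<le> r1 \<and> s \<le> r3) \<or> (r1 \<le> s \<and> r3 \<le> s)"
    | "(s \<le> r2 \<and> s \<le> r3) \<or> (r2 \<le> s \<and> r3 \<le> s)"
    by linarith
  then show ?thesis using pair[of r1 r2] pair[of r1 r3] pair[of r2 r3] assms by cases blast+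
qed

lemma ex_non_collinear_triple:
  fixes S :: "(real \<times> real) set"
  assumes "\<And>a b. a \<noteq> b \<Longrightarrow> \<not> S \<subseteq> {c. det3 a b c = 0}"
  obtains p a b where "p \<in> S" "a \<in> S" "b \<in> S" "a \<noteq> b" "det3 a b p \<noteq> 0"
proof -
  have "(0, 0) \<noteq> (1 :: real, 0 :: real)" by simp
  from assms[OF this] obtain a where a: "a \<in> S" by blast
  have "(fst a + 1, snd a) \<noteq> a" by (simp add: prod_eq_iff)
  from assms[OF this] obtain b where b: "b \<in> S" "b \<noteq> a" by (auto simp: det3_def)
  from assms[OF b(2)[symmetric]] obtain p where "p \<in> S" "det3 a b p \<noteq> 0" by blast
  then show ?thesis using that a b by blast
qed

text \<open>Kelly's proof: a point and a connecting line at minimal positive distance from each other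
  cannot have a third point on the line.\<close>

theorem sylvester_gallai:
  fixes S :: "(real \<times> real) set"
  assumes "finite S" and not_collinear: "\<And>a b. a \<noteq> b \<Longrightarrow> \<not> S \<subseteq> {c. det3 a b c = 0}"
  shows "\<exists>a\<in>S. \<exists>b\<in>S. a \<noteq> b \<and> (\<forall>c\<in>S. det3 a b c = 0 \<longrightarrow> c = a \<or> c = b)"
proof -
  define Tr where "Tr = {(p, a, b). p \<in> S \<and> a \<in> S \<and> b \<in> S \<and> a \<noteq> b \<and> det3 a b p \<noteq> 0}"
  define f where "f = (\<lambda>(p, a, b). sq_dist_to_line a b p)"
  have "finite Tr"
    by (rule finite_subset[of _ "S \<times> S \<times> S"]) (auto simp: Tr_def assms(1))
  moreover obtain p0 a0 b0 where "(p0, a0, b0) \<in> Tr"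
    using ex_non_collinear_triple[OF not_collinear] unfolding Tr_def by blast
  then have "Tr \<noteq> {}" by blast
  ultimately have "arg_min_on f Tr \<in> Tr" "\<And>t. t \<in> Tr \<Longrightarrow> \<not> f t < f (arg_min_on f Tr)"
    using arg_min_if_finite[of Tr f] by blast+
  moreover obtain p a b where "arg_min_on f Tr = (p, a, b)" by (cases "arg_min_on f Tr")
  ultimately have min: "(p, a, b) \<in> Tr" "\<And>t. t \<in> Tr \<Longrightarrow> \<not> f t < f (p, a, b)" by auto
  then have P: "p \<in> S" "a \<in> S" "b \<in> S" "a \<noteq> b" "det3 a b p \<noteq> 0" by (auto simp: Tr_def)
  have "c = a \<or> c = b" if c: "c \<in> S" "det3 a b c = 0" for c
  proof (rule ccontr)
    assume c_new: "\<not> (c = a \<or> c = b)"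
    define pt where "pt s = (fst a + s * (fst b - fst a), snd a + s * (snd b - snd a))" for s
    define tc where "tc = ((fst c - fst a) * (fst b - fst a) + (snd c - snd a) * (snd b - snd a))
      / sq_dist a b"
    have pts: "pt 0 = a" "pt 1 = b" "pt tc = c"
      using det3_eq_0_imp_on_line[OF P(4) c(2)] by (simp_all add: pt_def tc_def)
    then have "tc \<noteq> 0" "tc \<noteq> 1" using c_new by auto
    define s0 where "s0 = ((fst p - fst a) * (fst b - fst a) + (snd p - snd a) * (snd b - snd a))
      / sq_dist a b"
    have "\<exists>x\<in>{0, 1, tc}. \<exists>z\<in>{0, 1, tc}. x \<noteq> z \<and> \<bar>x - z\<bar> \<le> \<bar>z - s0\<bar>"
      using \<open>tc \<noteq> 0\<close> \<open>tc \<noteq> 1\<close> by (intro two_on_same_side) auto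
    then obtain x z where xz: "x \<in> {0, 1, tc}" "z \<in> {0, 1, tc}" "x \<noteq> z" "\<bar>x - z\<bar> \<le> \<bar>z - s0\<bar>"
      by blast
    have "pt x \<in> S" "pt z \<in> S" using xz(1,2) pts P c(1) by auto
    moreover note closer = sq_dist_to_line_decreases[OF P(4,5) s0_def xz(4,3), folded pt_def]
    moreover from closer(1) have "p \<noteq> pt z" by auto
    ultimately have "(pt x, p, pt z) \<in> Tr" "f (pt x, p, pt z) < f (p, a, b)"
      using P(1) by (simp_all add: Tr_def f_def)
    then show False using min(2) by blast
  qed
  then show ?thesis using P by blast
qed

lemma line_through_two_points_unique:
  fixes P Q :: "real \<times> real"
  assumes "P \<noteq> Q" "al * fst P + be * snd P + ga = 0" "al * fst Q + be * snd Q + ga = 0"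
  shows "\<exists>\<mu>. al = \<mu> * (snd P - snd Q) \<and> be = \<mu> * (fst Q - fst P) \<and>
    ga = \<mu> * (fst P * snd Q - fst Q * snd P)"
proof -
  define D1 D2 where "D1 = fst Q - fst P" and "D2 = snd Q - snd P"
  have N: "D1\<^sup>2 + D2\<^sup>2 \<noteq> 0"
    using sq_dist_pos[OF assms(1)] unfolding sq_dist_def D1_def D2_def by linarith
  have o: "al * D1 + be * D2 = 0" using assms(2,3) unfolding D1_def D2_def by algebra
  define \<mu> where "\<mu> = (be * D1 - al * D2) / (D1\<^sup>2 + D2\<^sup>2)"
  have "al * (D1\<^sup>2 + D2\<^sup>2) = (be * D1 - al * D2) * (- D2)"
    "be * (D1\<^sup>2 + D2\<^sup>2) = (be * D1 - al * D2) * D1"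
    using o by algebra+
  then have al: "al = \<mu> * (snd P - snd Q)" and be: "be = \<mu> * (fst Q - fst P)"
    using N by (simp_all add: \<mu>_def D1_def D2_def field_simps)
  have "ga = \<mu> * (fst P * snd Q - fst Q * snd P)"
    using assms(2) unfolding al be by algebra
  then show ?thesis using al be by blast
qed

section \<open>Ordinary lines of a net\<close>

text \<open>The points \<open>x \<in> X\<close> act as linear functionals \<open>ev _ x\<close> on a three-dimensional space, that
  is, as points of the dual projective plane. In the affine chart given by a member \<open>f\<close> that
  vanishes at no point of \<open>X\<close>, they become the points \<open>chart x\<close> and the members become lines.\<close>

locale affine_chart =
  fixes ev :: "'v::real_vector \<Rightarrow> 'p \<Rightarrow> real" and X :: "'p set" and f1 f2 f :: 'v
  assumes linear_ev: "\<And>x. linear (\<lambda>c. ev c x)"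
    and ev_f_nonzero: "\<And>x. x \<in> X \<Longrightarrow> ev f x \<noteq> 0"
    and independent3: "\<And>a1 a2 a3. a1 *\<^sub>R f1 + a2 *\<^sub>R f2 + a3 *\<^sub>R f = 0 \<Longrightarrow> a1 = 0 \<and> a2 = 0 \<and> a3 = 0"
begin

definition comb :: "real \<Rightarrow> real \<Rightarrow> real \<Rightarrow> 'v" where
  "comb a1 a2 a3 = a1 *\<^sub>R f1 + a2 *\<^sub>R f2 + a3 *\<^sub>R f"

definition chart :: "'p \<Rightarrow> real \<times> real" where
  "chart x = (ev f1 x / ev f x, ev f2 x / ev f x)"

definition line :: "real \<times> real \<Rightarrow> real \<times> real \<Rightarrow> 'v" where
  "line P Q = comb (snd P - snd Q) (fst Q - fst P) (fst P * snd Q - fst Q * snd P)"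

lemma ev_comb:
  "x \<in> X \<Longrightarrow> ev (comb a1 a2 a3) x = ev f x * (a1 * fst (chart x) + a2 * snd (chart x) + a3)"
  using ev_f_nonzero[of x]
  by (simp add: comb_def chart_def linear_add[OF linear_ev] linear_scale[OF linear_ev] field_simps)

lemma ev_line: "x \<in> X \<Longrightarrow> ev (line P Q) x = ev f x * det3 P Q (chart x)"
  unfolding line_def by (simp add: ev_comb det3_def) algebra

lemma line_nonzero: "P \<noteq> Q \<Longrightarrow> line P Q \<noteq> 0"
  using independent3 by (fastforce simp: line_def comb_def prod_eq_iff)

lemma comb_vanishing_at_two_points:
  assumes "x \<in> X" "y \<in> X" "chart x \<noteq> chart y"
    and "ev (comb b1 b2 b3) x = 0" "ev (comb b1 b2 b3) y = 0"
  shows "\<exists>\<mu>. comb b1 b2 b3 = \<mu> *\<^sub>R line (chart x) (chart y)"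
proof -
  have "b1 * fst (chart x) + b2 * snd (chart x) + b3 = 0"
    "b1 * fst (chart y) + b2 * snd (chart y) + b3 = 0"
    using assms ev_f_nonzero by (simp_all add: ev_comb)
  from line_through_two_points_unique[OF assms(3) this] obtain \<mu> where
    "b1 = \<mu> * (snd (chart x) - snd (chart y))" "b2 = \<mu> * (fst (chart y) - fst (chart x))"
    "b3 = \<mu> * (fst (chart x) * snd (chart y) - fst (chart y) * snd (chart x))" by blast
  then show ?thesis by (auto simp: line_def comb_def scaleR_add_right)
qed

lemma comb_vanishing_same_chart:
  assumes "w \<in> X" "z \<in> X" "chart z = chart w" "ev (comb b1 b2 b3) w = 0"
  shows "ev (comb b1 b2 b3) z = 0"
  using assms ev_f_nonzero by (simp add: ev_comb)

end

lemma ex_affine_chart: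
  fixes V :: "'v::real_vector set" and ev :: "'v \<Rightarrow> 'p \<Rightarrow> real" and X :: "'p set"
  assumes V: "subspace V" "dim V = 3" and "finite X" "X \<noteq> {}" and ev: "\<And>x. linear (\<lambda>c. ev c x)"
    and nondegenerate: "\<And>x. x \<in> X \<Longrightarrow> \<exists>c\<in>V. ev c x \<noteq> 0"
  obtains f1 f2 f where "affine_chart ev X f1 f2 f" "f1 \<in> V" "f2 \<in> V" "f \<in> V"
    "\<And>g. g \<in> V \<Longrightarrow> \<exists>a1 a2 a3. g = a1 *\<^sub>R f1 + a2 *\<^sub>R f2 + a3 *\<^sub>R f"
proof -
  obtain f where f: "f \<in> V" "\<And>x. x \<in> X \<Longrightarrow> ev f x \<noteq> 0"
    using ex_nonvanishing_on_finite[where \<phi> = "\<lambda>x c. ev c x", OF V(1) \<open>finite X\<close> ev nondegenerate]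
    by blast
  then have "f \<noteq> 0" using \<open>X \<noteq> {}\<close> linear_0[OF ev] by force
  then obtain f1 f2 where f12: "f1 \<in> V" "f2 \<in> V"
    "\<And>g. g \<in> V \<Longrightarrow> \<exists>a1 a2 a3. g = a1 *\<^sub>R f1 + a2 *\<^sub>R f2 + a3 *\<^sub>R f"
    "\<And>a1 a2 a3. a1 *\<^sub>R f1 + a2 *\<^sub>R f2 + a3 *\<^sub>R f = 0 \<Longrightarrow> a1 = 0 \<and> a2 = 0 \<and> a3 = 0"
    using dim_3_basis_containing[OF V(2) f(1)] by blast
  have "affine_chart ev X f1 f2 f" unfolding affine_chart_def using ev f(2) f12(4) by blast
  then show ?thesis using that f(1) f12(1-3) by blast
qed

theorem sylvester_gallai_net:
  fixes V :: "'v::real_vector set" and ev :: "'v \<Rightarrow> 'p \<Rightarrow> real" and X :: "'p set"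
  assumes V: "subspace V" "dim V = 3" and "finite X" and ev: "\<And>x. linear (\<lambda>c. ev c x)"
    and nondegenerate: "\<And>x. x \<in> X \<Longrightarrow> \<exists>c\<in>V. ev c x \<noteq> 0"
    and spanning: "\<And>c. c \<in> V \<Longrightarrow> c \<noteq> 0 \<Longrightarrow> \<exists>x\<in>X. ev c x \<noteq> 0"
  obtains c x y where "c \<in> V" "c \<noteq> 0" "x \<in> X" "y \<in> X" "ev c x = 0" "ev c y = 0"
    "\<And>g. g \<in> V \<Longrightarrow> ev g x = 0 \<Longrightarrow> ev g y = 0 \<Longrightarrow> \<exists>k. g = k *\<^sub>R c"
    "\<And>z. z \<in> X \<Longrightarrow> ev c z = 0 \<Longrightarrow>
      (\<forall>g\<in>V. ev g x = 0 \<longrightarrow> ev g z = 0) \<or> (\<forall>g\<in>V. ev g y = 0 \<longrightarrow> ev g z = 0)"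
proof -
  obtain B where B: "B \<subseteq> V" "independent B" "V \<subseteq> span B" "card B = dim V"
    using basis_exists by blast
  then obtain c0 where "c0 \<in> B" using V(2) by fastforce
  then have "X \<noteq> {}" using spanning[of c0] B(1,2) dependent_zero by blast
  then obtain f1 f2 f where "affine_chart ev X f1 f2 f" "f1 \<in> V" "f2 \<in> V" "f \<in> V"
    and onto: "\<And>g. g \<in> V \<Longrightarrow> \<exists>a1 a2 a3. g = a1 *\<^sub>R f1 + a2 *\<^sub>R f2 + a3 *\<^sub>R f"
    using ex_affine_chart[where ev = ev, OF V \<open>finite X\<close> \<open>X \<noteq> {}\<close> ev nondegenerate] by blast
  interpret affine_chart ev X f1 f2 f by fact
  have comb_onto: "\<exists>b1 b2 b3. g = comb b1 b2 b3" if "g \<in> V" for g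
    using onto[OF that] by (simp add: comb_def)
  have line_V: "line P Q \<in> V" for P Q
    using V(1) \<open>f1 \<in> V\<close> \<open>f2 \<in> V\<close> \<open>f \<in> V\<close>
    by (simp add: line_def comb_def subspace_add subspace_scale)
  have "\<not> chart ` X \<subseteq> {Z. det3 P Q Z = 0}" if PQ: "P \<noteq> Q" for P Q
  proof -
    obtain x where "x \<in> X" "ev (line P Q) x \<noteq> 0"
      using spanning[OF line_V line_nonzero[OF PQ]] by blast
    then show ?thesis using ev_line by auto
  qed
  from sylvester_gallai[OF finite_imageI[OF \<open>finite X\<close>] this] obtain x y where
    xy: "x \<in> X" "y \<in> X" "chart x \<noteq> chart y"
    and ordinary: "\<And>z. z \<in> X \<Longrightarrow> det3 (chart x) (chart y) (chart z) = 0
      \<Longrightarrow> chart z = chart x \<or> chart z = chart y"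
    by blast
  show ?thesis
  proof (rule that[of "line (chart x) (chart y)" x y])
    show "ev (line (chart x) (chart y)) x = 0" "ev (line (chart x) (chart y)) y = 0"
      using xy(1,2) by (simp_all add: ev_line)
    show "\<exists>k. g = k *\<^sub>R line (chart x) (chart y)" if "g \<in> V" "ev g x = 0" "ev g y = 0" for g
      using comb_onto[OF that(1)] comb_vanishing_at_two_points[OF xy] that(2,3) by blast
    show "(\<forall>g\<in>V. ev g x = 0 \<longrightarrow> ev g z = 0) \<or> (\<forall>g\<in>V. ev g y = 0 \<longrightarrow> ev g z = 0)"
      if z: "z \<in> X" "ev (line (chart x) (chart y)) z = 0" for z
    proof -
      have same: "ev g z = 0" if "w \<in> X" "chart z = chart w" "g \<in> V" "ev g w = 0" for w g
        using comb_onto[OF that(3)] comb_vanishing_same_chart[OF that(1) z(1) that(2)] that(4)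
        by blast
      have "chart z = chart x \<or> chart z = chart y"
        using z ordinary[OF z(1)] ev_f_nonzero[OF z(1)] by (simp add: ev_line)
      then show ?thesis using same xy(1,2) by blast
    qed
  qed (use xy line_V line_nonzero in auto)
qed

section \<open>Polynomials in two variables\<close>

type_synonym bipoly = "nat \<Rightarrow> nat \<Rightarrow> real"

lemma sum_fun_apply: "(\<Sum>x\<in>S. F x) a = (\<Sum>x\<in>S. F x a)"
  by (induct S rule: infinite_finite_induct) auto

lemma linear_bipoly_eval: "linear (\<lambda>c. bipoly_eval d c p)"
  by (rule linearI) (simp_all add: bipoly_eval_def algebra_simps sum.distrib sum_distrib_left)

lemmas bipoly_eval_add [simp] = linear_add[OF linear_bipoly_eval]
  and bipoly_eval_diff [simp] = linear_diff[OF linear_bipoly_eval]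
  and bipoly_eval_scaleR [simp] = linear_scale[OF linear_bipoly_eval, unfolded real_scaleR_def]
  and bipoly_eval_0 [simp] = linear_0[OF linear_bipoly_eval]

definition polys_le :: "nat \<Rightarrow> bipoly set" where
  "polys_le d = {c. \<forall>i j. d < i + j \<longrightarrow> c i j = 0}"

definition exponents_le :: "nat \<Rightarrow> (nat \<times> nat) set" where
  "exponents_le d = {(i, j). i + j \<le> d}"

definition bimonom :: "nat \<times> nat \<Rightarrow> bipoly" where
  "bimonom = (\<lambda>(i, j) a b. if a = i \<and> b = j then 1 else 0)"

lemma subspace_polys_le: "subspace (polys_le d)"
  unfolding subspace_def polys_le_def by auto

lemma polys_le_mono: "d \<le> e \<Longrightarrow> polys_le d \<subseteq> polys_le e"
  unfolding polys_le_def by auto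

lemma finite_exponents_le: "finite (exponents_le d)"
  by (rule finite_subset[of _ "{..d} \<times> {..d}"]) (auto simp: exponents_le_def)

lemma card_exponents_le: "card (exponents_le d) = (d + 2) choose 2"
proof (induct d)
  case 0
  have "exponents_le 0 = {(0, 0)}" by (auto simp: exponents_le_def)
  then show ?case by (simp add: numeral_2_eq_2)
next
  case (Suc d)
  define diagonal where "diagonal = (\<lambda>i. (i, Suc d - i)) ` {..Suc d}"
  have split: "exponents_le (Suc d) = exponents_le d \<union> diagonal"
    by (auto simp: exponents_le_def diagonal_def image_iff)
  have "exponents_le d \<inter> diagonal = {}" by (auto simp: exponents_le_def diagonal_def)
  moreover have "card diagonal = d + 2"
    unfolding diagonal_def by (subst card_image) (auto simp: inj_on_def)
  ultimately have "card (exponents_le (Suc d)) = card (exponents_le d) + (d + 2)"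
    unfolding split by (simp add: card_Un_disjoint finite_exponents_le diagonal_def)
  then show ?case using Suc by (simp add: numeral_2_eq_2)
qed

lemma inj_bimonom: "inj bimonom"
  by (auto simp: inj_def bimonom_def fun_eq_iff split: prod.splits if_splits)

lemma bipoly_eq_sum_bimonom:
  assumes "c \<in> polys_le d"
  shows "c = (\<Sum>e\<in>exponents_le d. c (fst e) (snd e) *\<^sub>R bimonom e)"
proof (intro ext)
  fix a b
  have "(\<Sum>e\<in>exponents_le d. c (fst e) (snd e) *\<^sub>R bimonom e) a b
      = (\<Sum>e\<in>exponents_le d. if e = (a, b) then c a b else 0)"
    unfolding sum_fun_apply by (rule sum.cong) (auto simp: bimonom_def split: prod.splits)
  also have "\<dots> = c a b"
    by (simp add: sum.delta finite_exponents_le)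
      (use assms in \<open>auto simp: exponents_le_def polys_le_def\<close>)
  finally show "c a b = (\<Sum>e\<in>exponents_le d. c (fst e) (snd e) *\<^sub>R bimonom e) a b" by simp
qed

lemma polys_le_eq_span: "polys_le d = span (bimonom ` exponents_le d)"
proof
  show "polys_le d \<subseteq> span (bimonom ` exponents_le d)"
  proof
    fix c assume "c \<in> polys_le d"
    then show "c \<in> span (bimonom ` exponents_le d)"
      by (subst bipoly_eq_sum_bimonom) (auto intro!: span_sum span_scale intro: span_base)
  qed
  show "span (bimonom ` exponents_le d) \<subseteq> polys_le d"
    by (rule span_minimal[OF _ subspace_polys_le])
      (auto simp: bimonom_def exponents_le_def polys_le_def)
qed

lemma independent_bimonoms: "independent (bimonom ` exponents_le d)"
proof
  assume "dependent (bimonom ` exponents_le d)"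
  then obtain u m where m: "m \<in> bimonom ` exponents_le d" "u m \<noteq> 0"
    and sum0: "(\<Sum>v\<in>bimonom ` exponents_le d. u v *\<^sub>R v) = 0"
    using dependent_finite[of "bimonom ` exponents_le d"] finite_exponents_le by blast
  obtain e where e: "e \<in> exponents_le d" "m = bimonom e" using m(1) by blast
  have "0 = (\<Sum>v\<in>bimonom ` exponents_le d. u v *\<^sub>R v) (fst e) (snd e)" using sum0 by simp
  also have "\<dots> = (\<Sum>e'\<in>exponents_le d. if e' = e then u (bimonom e) else 0)"
    unfolding sum_fun_apply sum.reindex[OF inj_on_subset[OF inj_bimonom subset_UNIV]]
    by (rule sum.cong) (auto simp: bimonom_def split: prod.splits)
  also have "\<dots> = u m" using e by (simp add: sum.delta finite_exponents_le)
  finally show False using m(2) by simp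
qed

lemma dim_polys_le: "dim (polys_le d) = (d + 2) choose 2"
proof -
  have "dim (polys_le d) = card (bimonom ` exponents_le d)"
    by (rule dim_eq_card[OF _ independent_bimonoms]) (simp add: polys_le_eq_span span_span)
  also have "\<dots> = (d + 2) choose 2"
    by (simp add: card_image inj_on_subset[OF inj_bimonom] card_exponents_le)
  finally show ?thesis .
qed

lemma has_degree_imp_polys_le: "has_degree d c \<Longrightarrow> c \<in> polys_le d"
  by (simp add: has_degree_def polys_le_def)

lemma has_degree_iff_polys_le:
  assumes "1 \<le> d"
  shows "has_degree d c \<longleftrightarrow> c \<in> polys_le d \<and> c \<notin> polys_le (d - 1)"
proof
  assume deg: "has_degree d c"
  then obtain i j where ij: "i + j = d" "c i j \<noteq> 0" by (auto simp: has_degree_def)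
  have "d - 1 < i + j" using ij(1) assms by simp
  then show "c \<in> polys_le d \<and> c \<notin> polys_le (d - 1)"
    using deg ij(2) by (auto simp: has_degree_def polys_le_def)
next
  assume c: "c \<in> polys_le d \<and> c \<notin> polys_le (d - 1)"
  then obtain i j where ij: "d - 1 < i + j" "c i j \<noteq> 0" by (auto simp: polys_le_def)
  moreover have "i + j \<le> d"
  proof (rule ccontr)
    assume "\<not> i + j \<le> d"
    then show False using c ij(2) by (auto simp: polys_le_def)
  qed
  ultimately have "i + j = d" by arith
  then show "has_degree d c" using c ij(2) by (auto simp: has_degree_def polys_le_def)
qed

lemma is_curve_zero_set: "has_degree d c \<Longrightarrow> is_curve d {p. bipoly_eval d c p = 0}"
  unfolding is_curve_def by blast

lemma ex_bipoly_eval_nonzero: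
  assumes "c \<in> polys_le d" "c \<noteq> 0"
  shows "\<exists>p. bipoly_eval d c p \<noteq> 0"
proof (rule ccontr)
  assume vanishes: "\<not> ?thesis"
  have eq: "bipoly_eval d c (x, y) = (\<Sum>i\<le>d. (\<Sum>j\<le>d. c i j * y ^ j) * x ^ i)" for x y
    unfolding bipoly_eval_def sum_distrib_right by (intro sum.cong refl) (simp add: algebra_simps)
  have all: "(\<Sum>i\<le>d. (\<Sum>j\<le>d. c i j * y ^ j) * x ^ i) = 0" for x y
    using vanishes eq[of x y] by auto
  have "(\<Sum>j\<le>d. c i j * y ^ j) = 0" if "i \<le> d" for i y
    using polyfun_eq_0[of "\<lambda>i. \<Sum>j\<le>d. c i j * y ^ j" d] all that by blast
  then have zero: "c i j = 0" if "i \<le> d" "j \<le> d" for i j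
    using polyfun_eq_0[of "\<lambda>j. c i j" d] that by blast
  obtain i j where "c i j \<noteq> 0" using assms(2) by (auto simp: fun_eq_iff)
  moreover from this have "\<not> d < i + j" using assms(1) by (auto simp: polys_le_def)
  ultimately show False using zero by simp
qed

lemma ex_has_degree:
  assumes "g \<in> polys_le e" "g \<noteq> 0"
  shows "\<exists>e'\<le>e. has_degree e' g"
  using assms
proof (induct e)
  case 0
  have "g 0 0 \<noteq> 0"
  proof
    assume "g 0 0 = 0"
    then have "g i j = 0" for i j using 0(1) by (cases "i + j = 0") (auto simp: polys_le_def)
    then show False using 0(2) by (auto simp: fun_eq_iff)
  qed
  then show ?case using 0 by (auto simp: has_degree_def polys_le_def)
next
  case (Suc e)
  show ?case
  proof (cases "\<exists>i j. i + j = Suc e \<and> g i j \<noteq> 0")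
    case True
    then show ?thesis using Suc.prems by (auto simp: has_degree_def polys_le_def)
  next
    case False
    have "g i j = 0" if "e < i + j" for i j
    proof (cases "i + j = Suc e")
      case True
      then show ?thesis using False by blast
    next
      case False
      then show ?thesis using that Suc.prems(1) by (simp add: polys_le_def)
    qed
    then have "g \<in> polys_le e" by (simp add: polys_le_def)
    then show ?thesis using Suc.hyps Suc.prems(2) le_Suc_eq by blast
  qed
qed

definition times_x_minus :: "real \<Rightarrow> bipoly \<Rightarrow> bipoly" where
  "times_x_minus a h = (\<lambda>i j. (if 0 < i then h (i - 1) j else 0) - a * h i j)"

lemma has_degree_times_x_minus:
  assumes "has_degree e h"
  shows "has_degree (Suc e) (times_x_minus a h)"
proof -
  obtain i j where ij: "i + j = e" "h i j \<noteq> 0" using assms by (auto simp: has_degree_def)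
  have top: "times_x_minus a h (Suc i) j = h i j"
    using assms ij by (simp add: times_x_minus_def has_degree_def)
  have "\<forall>i' j'. Suc e < i' + j' \<longrightarrow> times_x_minus a h i' j' = 0"
    using assms by (auto simp: has_degree_def times_x_minus_def)
  moreover have "Suc i + j = Suc e \<and> times_x_minus a h (Suc i) j \<noteq> 0" using ij top by simp
  ultimately show ?thesis unfolding has_degree_def by blast
qed

lemma bipoly_eval_times_x_minus:
  assumes "h \<in> polys_le e" "e < d"
  shows "bipoly_eval d (times_x_minus a h) p = (fst p - a) * bipoly_eval d h p"
proof -
  obtain d' where d': "d = Suc d'" using assms(2) by (cases d) auto
  define x where "x = fst p"
  define y where "y = snd p"
  have top: "h (Suc d') j = 0" for j using assms d' by (auto simp: polys_le_def)
  have shifted: "(\<Sum>i\<le>d. \<Sum>j\<le>d. (if 0 < i then h (i - 1) j else 0) * x ^ i * y ^ j)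
      = x * (\<Sum>i\<le>d'. \<Sum>j\<le>d. h i j * x ^ i * y ^ j)"
    unfolding d' sum.atMost_Suc_shift by (simp add: sum_distrib_left algebra_simps)
  have truncated: "(\<Sum>i\<le>d. \<Sum>j\<le>d. h i j * x ^ i * y ^ j) = (\<Sum>i\<le>d'. \<Sum>j\<le>d. h i j * x ^ i * y ^ j)"
    unfolding d' sum.atMost_Suc using top by simp
  have "bipoly_eval d (times_x_minus a h) p
      = (\<Sum>i\<le>d. \<Sum>j\<le>d. (if 0 < i then h (i - 1) j else 0) * x ^ i * y ^ j)
        - a * (\<Sum>i\<le>d. \<Sum>j\<le>d. h i j * x ^ i * y ^ j)"
    unfolding bipoly_eval_def times_x_minus_def x_def y_def
    by (simp add: algebra_simps sum_subtractf sum_distrib_left)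
  also have "\<dots> = (x - a) * bipoly_eval d h p"
    unfolding shifted bipoly_eval_def x_def[symmetric] y_def[symmetric] truncated
    by (simp add: algebra_simps)
  finally show ?thesis by (simp add: x_def)
qed

lemma times_x_minus_power:
  assumes "has_degree e g" "e + k \<le> d"
  shows "has_degree (e + k) ((times_x_minus a ^^ k) g)"
    and "bipoly_eval d ((times_x_minus a ^^ k) g) p = (fst p - a) ^ k * bipoly_eval d g p"
proof -
  have "has_degree (e + k) ((times_x_minus a ^^ k) g) \<and>
    (\<forall>p. bipoly_eval d ((times_x_minus a ^^ k) g) p = (fst p - a) ^ k * bipoly_eval d g p)"
    using assms(2)
  proof (induct k)
    case 0
    then show ?case using assms(1) by simp
  next
    case (Suc k)
    then have IH: "has_degree (e + k) ((times_x_minus a ^^ k) g)"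
      "\<And>p. bipoly_eval d ((times_x_minus a ^^ k) g) p = (fst p - a) ^ k * bipoly_eval d g p"
      by auto
    show ?case
      using has_degree_times_x_minus[OF IH(1)] IH(2) Suc.prems
        bipoly_eval_times_x_minus[OF has_degree_imp_polys_le[OF IH(1)]]
      by simp
  qed
  then show "has_degree (e + k) ((times_x_minus a ^^ k) g)"
    and "bipoly_eval d ((times_x_minus a ^^ k) g) p = (fst p - a) ^ k * bipoly_eval d g p"
    by blast+
qed

text \<open>With \<open>k = d - deg g\<close>, the curves \<open>(x - a)\<^sup>k g = 0\<close> for \<open>a = fst q\<close> and \<open>a = fst q + 1\<close>,
  where \<open>g q \<noteq> 0\<close>, both contain the zero set of \<open>g\<close> but differ at \<open>q\<close>.\<close>

lemma lower_degree_zero_set_in_two_curves: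
  assumes "1 \<le> d" "g \<in> polys_le (d - 1)" "g \<noteq> 0"
  shows "\<exists>C1 C2. is_curve d C1 \<and> is_curve d C2 \<and> C1 \<noteq> C2 \<and>
     {p. bipoly_eval d g p = 0} \<subseteq> C1 \<and> {p. bipoly_eval d g p = 0} \<subseteq> C2"
proof -
  obtain e where e: "e \<le> d - 1" "has_degree e g" using ex_has_degree assms(2,3) by blast
  define k where "k = d - e"
  have k: "1 \<le> k" "e + k = d" using e assms(1) by (auto simp: k_def)
  have "g \<in> polys_le d" using assms(2) polys_le_mono[of "d - 1" d] by auto
  then obtain q where q: "bipoly_eval d g q \<noteq> 0" using ex_bipoly_eval_nonzero assms(3) by blast
  define C where "C b = {p. bipoly_eval d ((times_x_minus b ^^ k) g) p = 0}" for b
  have curve: "is_curve d (C b)" for b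
    unfolding C_def using is_curve_zero_set times_x_minus_power(1)[OF e(2)] k(2) by fastforce
  have eval: "bipoly_eval d ((times_x_minus b ^^ k) g) p = (fst p - b) ^ k * bipoly_eval d g p"
    for b p using times_x_minus_power(2)[OF e(2)] k(2) by simp
  have "q \<in> C (fst q)" "q \<notin> C (fst q + 1)" using q k(1) by (simp_all add: C_def eval)
  moreover have "{p. bipoly_eval d g p = 0} \<subseteq> C b" for b by (auto simp: C_def eval)
  ultimately show ?thesis using curve by blast
qed

definition at_most_one_curve_through :: "nat \<Rightarrow> nat \<Rightarrow> (real \<times> real) set \<Rightarrow> bool" where
  "at_most_one_curve_through d n A \<longleftrightarrow> (\<forall>B \<subseteq> A. card B = n \<longrightarrow>
     (\<forall>C1 C2. is_curve d C1 \<and> is_curve d C2 \<and> B \<subseteq> C1 \<and> B \<subseteq> C2 \<longrightarrow> C1 = C2))"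

definition vanishing :: "nat \<Rightarrow> bipoly set \<Rightarrow> (real \<times> real) set \<Rightarrow> bipoly set" where
  "vanishing d W S = {c \<in> W. \<forall>p\<in>S. bipoly_eval d c p = 0}"

definition common_zeros :: "nat \<Rightarrow> bipoly set \<Rightarrow> (real \<times> real) set \<Rightarrow> (real \<times> real) set" where
  "common_zeros d W A = {p \<in> A. \<forall>c\<in>W. bipoly_eval d c p = 0}"

lemma subspace_vanishing: "subspace W \<Longrightarrow> subspace (vanishing d W S)"
  unfolding subspace_def vanishing_def by auto

lemma vanishing_subset: "vanishing d W S \<subseteq> W"
  by (auto simp: vanishing_def)

lemma vanishing_insert: "vanishing d W (insert p S) = {c \<in> vanishing d W S. bipoly_eval d c p = 0}"
  by (auto simp: vanishing_def)

lemma dim_vanishing_insert: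
  assumes "subspace W" "W \<subseteq> polys_le d" "c \<in> vanishing d W S" "bipoly_eval d c p \<noteq> 0"
  shows "dim (vanishing d W S) = dim (vanishing d W (insert p S)) + 1"
proof -
  have "vanishing d W S \<subseteq> span (bimonom ` exponents_le d)"
    using vanishing_subset assms(2) polys_le_eq_span by blast
  then show ?thesis
    unfolding vanishing_insert
    by (rule dim_kernel_on_subspace[where \<phi> = "\<lambda>c. bipoly_eval d c p",
          OF subspace_vanishing[OF assms(1)] _ finite_imageI[OF finite_exponents_le]
          linear_bipoly_eval assms(3,4)])
qed

lemma dim_subset_polys_le: "S \<subseteq> T \<Longrightarrow> T \<subseteq> polys_le d \<Longrightarrow> dim S \<le> dim T"
  using dim_subset_finite_span[of S T "bimonom ` exponents_le d"] polys_le_eq_span[of d]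
  by (simp add: finite_exponents_le)

lemma lower_degree_not_vanishing_on_n_points:
  assumes "at_most_one_curve_through d n A" "B \<subseteq> A" "card B = n" "1 \<le> d"
    and "g \<in> vanishing d (polys_le (d - 1)) B"
  shows "g = 0"
proof (rule ccontr)
  assume "g \<noteq> 0"
  then obtain C1 C2 where "is_curve d C1" "is_curve d C2" "C1 \<noteq> C2"
     "{p. bipoly_eval d g p = 0} \<subseteq> C1" "{p. bipoly_eval d g p = 0} \<subseteq> C2"
    using lower_degree_zero_set_in_two_curves assms(4,5) vanishing_subset by blast
  moreover have "B \<subseteq> {p. bipoly_eval d g p = 0}" using assms(5) by (auto simp: vanishing_def)
  ultimately show False using assms(1-3) unfolding at_most_one_curve_through_def by blast
qed

lemma dim_vanishing_on_n_points_le_1: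
  assumes "at_most_one_curve_through d n A" "B \<subseteq> A" "card B = n" "1 \<le> d"
  shows "dim (vanishing d (polys_le d) B) \<le> 1"
proof (rule ccontr)
  let ?V = "vanishing d (polys_le d) B"
  have V: "subspace ?V" by (rule subspace_vanishing[OF subspace_polys_le])
  have curve: "is_curve d {p. bipoly_eval d f p = 0}" if "f \<in> ?V" "f \<noteq> 0" for f
  proof -
    have "f \<notin> vanishing d (polys_le (d - 1)) B"
      using lower_degree_not_vanishing_on_n_points[OF assms] that(2) by blast
    then have "f \<notin> polys_le (d - 1)" using that(1) by (auto simp: vanishing_def)
    moreover have "f \<in> polys_le d" using that(1) by (simp add: vanishing_def)
    ultimately show ?thesis using assms(4) is_curve_zero_set has_degree_iff_polys_le by blast
  qed
  assume "\<not> ?thesis"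
  then have "2 \<le> dim ?V" by simp
  then obtain f g where fg: "f \<in> ?V" "g \<in> ?V" "f \<noteq> 0" "g \<notin> span {f}"
    by (rule dim_ge_2_obtain)
  have "f \<in> polys_le d" using fg(1) by (simp add: vanishing_def)
  then obtain q where q: "bipoly_eval d f q \<noteq> 0" using ex_bipoly_eval_nonzero fg(3) by blast
  \<comment> \<open>\<open>f\<close> and \<open>h\<close> define two curves through \<open>B\<close> that differ at \<open>q\<close>\<close>
  define h where "h = bipoly_eval d g q *\<^sub>R f - bipoly_eval d f q *\<^sub>R g"
  have h: "h \<in> ?V" unfolding h_def using fg(1,2) V by (simp add: subspace_diff subspace_scale)
  have "h \<noteq> 0"
  proof
    assume "h = 0"
    then have "bipoly_eval d f q *\<^sub>R g = bipoly_eval d g q *\<^sub>R f" by (simp add: h_def)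
    then have "inverse (bipoly_eval d f q) *\<^sub>R (bipoly_eval d f q *\<^sub>R g)
        = (bipoly_eval d g q / bipoly_eval d f q) *\<^sub>R f"
      by (simp add: divide_inverse mult.commute)
    then have "g = (bipoly_eval d g q / bipoly_eval d f q) *\<^sub>R f" using q by simp
    also have "\<dots> \<in> span {f}" by (simp add: span_base span_scale)
    finally show False using fg(4) by blast
  qed
  have "q \<notin> {p. bipoly_eval d f p = 0}" "q \<in> {p. bipoly_eval d h p = 0}"
    using q by (simp_all add: h_def)
  then have "{p. bipoly_eval d f p = 0} \<noteq> {p. bipoly_eval d h p = 0}" by blast
  moreover have "B \<subseteq> {p. bipoly_eval d f p = 0}" "B \<subseteq> {p. bipoly_eval d h p = 0}"
    using fg(1) h by (auto simp: vanishing_def)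
  moreover note curve[OF fg(1,3)] curve[OF h \<open>h \<noteq> 0\<close>]
  ultimately show False using assms(1-3) unfolding at_most_one_curve_through_def by blast
qed

lemma card_common_zeros_lt_if_dim_ge_2:
  assumes "at_most_one_curve_through d n A" "1 \<le> d" "W \<subseteq> polys_le d" "2 \<le> dim W"
  shows "card (common_zeros d W A) < n"
proof (rule ccontr)
  assume "\<not> ?thesis"
  then obtain B where B: "B \<subseteq> common_zeros d W A" "card B = n"
    by (meson not_less obtain_subset_with_card_n)
  then have "B \<subseteq> A" by (auto simp: common_zeros_def)
  have "W \<subseteq> vanishing d (polys_le d) B"
    using B(1) assms(3) by (auto simp: common_zeros_def vanishing_def)
  then have "dim W \<le> dim (vanishing d (polys_le d) B)"
    using vanishing_subset by (rule dim_subset_polys_le)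
  then show False using dim_vanishing_on_n_points_le_1[OF assms(1) \<open>B \<subseteq> A\<close> B(2) assms(2)] assms(4)
    by simp
qed

lemma card_common_zeros_lt_if_lower_degree:
  assumes "at_most_one_curve_through d n A" "1 \<le> d" "W \<subseteq> polys_le (d - 1)" "g \<in> W" "g \<noteq> 0"
  shows "card (common_zeros d W A) < n"
proof (rule ccontr)
  assume "\<not> ?thesis"
  then obtain B where B: "B \<subseteq> common_zeros d W A" "card B = n"
    by (meson not_less obtain_subset_with_card_n)
  then have "B \<subseteq> A" by (auto simp: common_zeros_def)
  have "g \<in> vanishing d (polys_le (d - 1)) B"
    using B(1) assms(3,4) by (auto simp: common_zeros_def vanishing_def)
  then show False
    using lower_degree_not_vanishing_on_n_points[OF assms(1) \<open>B \<subseteq> A\<close> B(2) assms(2)] assms(5)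
    by blast
qed

section \<open>Sequences of points imposing independent conditions\<close>

text \<open>By truncated subtraction, once \<open>S\<close> has cut \<open>W\<close> down to \<open>{0}\<close>, any further points are
  counted as independent conditions.\<close>

definition independent_conditions :: "nat \<Rightarrow> bipoly set \<Rightarrow> (real \<times> real) set \<Rightarrow> bool" where
  "independent_conditions d W S \<longleftrightarrow> dim (vanishing d W S) = dim W - card S"

definition generic_sequence :: "nat \<Rightarrow> (real \<times> real) set \<Rightarrow> (real \<times> real) list \<Rightarrow> bool" where
  "generic_sequence d A xs \<longleftrightarrow> set xs \<subseteq> A \<and> distinct xs \<and>
     independent_conditions d (polys_le d) (set xs) \<and>
     independent_conditions d (polys_le (d - 1)) (set xs)"

lemma independent_conditions_insert:
  assumes "subspace W" "W \<subseteq> polys_le d" "independent_conditions d W S" "finite S" "p \<notin> S"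
    and "vanishing d W S \<subseteq> {0} \<or> (\<exists>c\<in>vanishing d W S. bipoly_eval d c p \<noteq> 0)"
  shows "independent_conditions d W (insert p S)"
  using assms(6)
proof
  assume zero: "vanishing d W S \<subseteq> {0}"
  then have "dim W \<le> card S"
    using assms(3) subset_0_imp_dim_eq_0[OF zero] by (simp add: independent_conditions_def)
  moreover have "vanishing d W (insert p S) \<subseteq> {0}" using zero by (auto simp: vanishing_def)
  ultimately show ?thesis using assms(4,5) subset_0_imp_dim_eq_0 by (simp add: independent_conditions_def)
next
  assume "\<exists>c\<in>vanishing d W S. bipoly_eval d c p \<noteq> 0"
  then have "dim (vanishing d W S) = dim (vanishing d W (insert p S)) + 1"
    using dim_vanishing_insert[OF assms(1,2)] by blast
  then show ?thesis using assms(3-5) by (simp add: independent_conditions_def)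
qed

lemma generic_sequence_Nil: "generic_sequence d A []"
  by (simp add: generic_sequence_def independent_conditions_def vanishing_def)

lemma generic_sequence_Cons:
  assumes "generic_sequence d A xs" "p \<in> A"
    and V: "\<exists>c\<in>vanishing d (polys_le d) (set xs). bipoly_eval d c p \<noteq> 0"
    and L: "vanishing d (polys_le (d - 1)) (set xs) \<subseteq> {0} \<or>
      (\<exists>c\<in>vanishing d (polys_le (d - 1)) (set xs). bipoly_eval d c p \<noteq> 0)"
  shows "generic_sequence d A (p # xs)"
proof -
  have low: "polys_le (d - 1) \<subseteq> polys_le d" by (rule polys_le_mono) simp
  have "p \<notin> set xs" using V by (auto simp: vanishing_def)
  moreover have "independent_conditions d (polys_le d) (insert p (set xs))"
    using assms(1) \<open>p \<notin> set xs\<close> V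
    by (intro independent_conditions_insert[OF subspace_polys_le order_refl])
      (auto simp: generic_sequence_def)
  moreover have "independent_conditions d (polys_le (d - 1)) (insert p (set xs))"
    using assms(1) \<open>p \<notin> set xs\<close> L
    by (intro independent_conditions_insert[OF subspace_polys_le low])
      (auto simp: generic_sequence_def)
  ultimately show ?thesis using assms(1,2) by (simp add: generic_sequence_def)
qed

lemma card_generic_extensions:
  assumes H: "at_most_one_curve_through d n A" and "finite A" "1 \<le> d"
    and xs: "generic_sequence d A xs" "length xs + 2 \<le> (d + 2) choose 2"
  shows "card A - 2 * (n - 1) \<le> card {p. generic_sequence d A (p # xs)}"
proof -
  let ?V = "vanishing d (polys_le d) (set xs)"
  let ?L = "vanishing d (polys_le (d - 1)) (set xs)"
  define Bad1 where "Bad1 = common_zeros d ?V A"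
  define Bad2 where "Bad2 = (if ?L \<subseteq> {0} then {} else common_zeros d ?L A)"
  have "2 \<le> dim ?V"
    using xs by (simp add: generic_sequence_def independent_conditions_def dim_polys_le
        distinct_card)
  then have card1: "card Bad1 < n"
    unfolding Bad1_def by (rule card_common_zeros_lt_if_dim_ge_2[OF H \<open>1 \<le> d\<close> vanishing_subset])
  have card2: "card Bad2 \<le> n - 1"
  proof (cases "?L \<subseteq> {0}")
    case False
    then obtain g where "g \<in> ?L" "g \<noteq> 0" by blast
    from card_common_zeros_lt_if_lower_degree[OF H \<open>1 \<le> d\<close> vanishing_subset this]
    show ?thesis using False by (simp add: Bad2_def)
  qed (simp add: Bad2_def)
  have "A - Bad1 - Bad2 \<subseteq> {p. generic_sequence d A (p # xs)}"
  proof
    fix p assume p: "p \<in> A - Bad1 - Bad2"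
    then have "\<exists>c\<in>?V. bipoly_eval d c p \<noteq> 0" "?L \<subseteq> {0} \<or> (\<exists>c\<in>?L. bipoly_eval d c p \<noteq> 0)"
      by (auto simp: Bad1_def Bad2_def common_zeros_def split: if_splits)
    then show "p \<in> {p. generic_sequence d A (p # xs)}"
      using generic_sequence_Cons[OF xs(1)] p by blast
  qed
  then have "card (A - Bad1 - Bad2) \<le> card {p. generic_sequence d A (p # xs)}"
    by (rule card_mono[rotated]) (use \<open>finite A\<close> in \<open>auto simp: generic_sequence_def\<close>)
  moreover have "card A - card Bad1 - card Bad2 \<le> card (A - Bad1 - Bad2)"
  proof -
    have "finite Bad1" "finite Bad2"
      using \<open>finite A\<close> by (auto simp: Bad1_def Bad2_def common_zeros_def)
    then show ?thesis
      using diff_card_le_card_Diff[of Bad1 A] diff_card_le_card_Diff[of Bad2 "A - Bad1"] by linarith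
  qed
  ultimately show ?thesis using card1 card2 by linarith
qed

section \<open>Ordinary curves through maximal generic sequences\<close>

lemma determined_if_unique_polynomial:
  assumes "has_degree d c"
    and unique: "\<And>g. g \<in> polys_le d \<Longrightarrow> (\<forall>p\<in>{p. bipoly_eval d c p = 0} \<inter> A. bipoly_eval d g p = 0)
      \<Longrightarrow> \<exists>k. g = k *\<^sub>R c"
  shows "determined d A {p. bipoly_eval d c p = 0}"
  unfolding determined_def
proof (intro conjI allI impI)
  show "is_curve d {p. bipoly_eval d c p = 0}" using assms(1) by (rule is_curve_zero_set)
  fix C2 assume C2: "is_curve d C2 \<and> {p. bipoly_eval d c p = 0} \<inter> A \<subseteq> C2 \<inter> A"
  then obtain g where g: "has_degree d g" "C2 = {p. bipoly_eval d g p = 0}"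
    unfolding is_curve_def by blast
  then obtain k where k: "g = k *\<^sub>R c" using unique[OF has_degree_imp_polys_le] C2 by blast
  have "g \<noteq> 0" using g(1) by (auto simp: has_degree_def)
  then have "k \<noteq> 0" using k by auto
  then show "{p. bipoly_eval d c p = 0} = C2" using g(2) k by simp
qed

lemma net_of_maximal_generic_sequence:
  assumes "2 \<le> d" "generic_sequence d A T" "length T + 3 = (d + 2) choose 2"
  shows "dim (vanishing d (polys_le d) (set T)) = 3"
    and "\<And>c. c \<in> vanishing d (polys_le d) (set T) \<Longrightarrow> c \<noteq> 0 \<Longrightarrow> has_degree d c"
proof -
  have card: "card (set T) = length T" using assms(2) by (simp add: generic_sequence_def distinct_card)
  then show "dim (vanishing d (polys_le d) (set T)) = 3"
    using assms(2,3) by (simp add: generic_sequence_def independent_conditions_def dim_polys_le)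
  have "(d - 1 + 2) choose 2 \<le> length T"
    using assms(1,3) by (simp add: numeral_2_eq_2 numeral_3_eq_3)
  then have "dim (vanishing d (polys_le (d - 1)) (set T)) = 0"
    using assms(2) card by (simp add: generic_sequence_def independent_conditions_def dim_polys_le)
  moreover have "vanishing d (polys_le (d - 1)) (set T) \<subseteq> span (bimonom ` exponents_le (d - 1))"
    using vanishing_subset polys_le_eq_span by blast
  ultimately have low: "vanishing d (polys_le (d - 1)) (set T) \<subseteq> {0}"
    using dim_eq_0_imp_subset_0 finite_exponents_le by blast
  fix c assume "c \<in> vanishing d (polys_le d) (set T)" "c \<noteq> 0"
  then show "has_degree d c"
    using low assms(1) by (auto simp: has_degree_iff_polys_le vanishing_def)
qed

lemma card_covered_by_two_pencils:
  assumes H: "at_most_one_curve_through d n A" and "finite A" "1 \<le> d" "finite S" "S \<subseteq> A"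
    and dim: "dim (vanishing d (polys_le d) S) = 3"
    and xy: "x \<in> A - common_zeros d (vanishing d (polys_le d) S) A"
      "y \<in> A - common_zeros d (vanishing d (polys_le d) S) A"
    and Z: "Z \<subseteq> common_zeros d (vanishing d (polys_le d) (insert x S)) A \<union>
      common_zeros d (vanishing d (polys_le d) (insert y S)) A"
  shows "card Z + card S + 2 \<le> 2 * n"
proof -
  define G where "G w = common_zeros d (vanishing d (polys_le d) (insert w S)) A" for w
  have card_G: "card (G w) < n" if w: "w \<in> A - common_zeros d (vanishing d (polys_le d) S) A" for w
  proof -
    obtain g where "g \<in> vanishing d (polys_le d) S" "bipoly_eval d g w \<noteq> 0"
      using w by (auto simp: common_zeros_def)
    then have "dim (vanishing d (polys_le d) (insert w S)) = 2"
      using dim_vanishing_insert[OF subspace_polys_le order_refl] dim by fastforce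
    then show ?thesis unfolding G_def
      using card_common_zeros_lt_if_dim_ge_2[OF H \<open>1 \<le> d\<close> vanishing_subset] by simp
  qed
  have "S \<subseteq> G x \<inter> G y" using \<open>S \<subseteq> A\<close> by (auto simp: G_def common_zeros_def vanishing_def)
  moreover have "finite (G x)" "finite (G y)" using \<open>finite A\<close> by (auto simp: G_def common_zeros_def)
  ultimately have "card Z + card S \<le> card (G x) + card (G y)"
    using card_covered_by_two_sets Z unfolding G_def by blast
  then show ?thesis using card_G[OF xy(1)] card_G[OF xy(2)] by linarith
qed

lemma zero_set_in_ordinary_curves:
  assumes H: "at_most_one_curve_through d n A" and "finite A" "2 \<le> d"
    and T: "generic_sequence d A T" "length T + 3 = (d + 2) choose 2"
  defines "V \<equiv> vanishing d (polys_le d) (set T)"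
    and "X \<equiv> A - common_zeros d (vanishing d (polys_le d) (set T)) A"
  assumes c: "c \<in> V" "c \<noteq> 0" and xy: "x \<in> X" "y \<in> X"
    "bipoly_eval d c x = 0" "bipoly_eval d c y = 0"
    and unique: "\<And>g. g \<in> V \<Longrightarrow> bipoly_eval d g x = 0 \<Longrightarrow> bipoly_eval d g y = 0 \<Longrightarrow> \<exists>k. g = k *\<^sub>R c"
    and ordinary: "\<And>z. z \<in> X \<Longrightarrow> bipoly_eval d c z = 0 \<Longrightarrow>
      (\<forall>g\<in>V. bipoly_eval d g x = 0 \<longrightarrow> bipoly_eval d g z = 0) \<or>
      (\<forall>g\<in>V. bipoly_eval d g y = 0 \<longrightarrow> bipoly_eval d g z = 0)"
  shows "{p. bipoly_eval d c p = 0} \<in> ordinary_curves d (real (2 * n + 1) - real ((d + 2) choose 2)) A"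
proof -
  let ?Z = "{p. bipoly_eval d c p = 0}"
  note net = net_of_maximal_generic_sequence[OF assms(3) T, folded V_def]
  have TA: "set T \<subseteq> A" and card_T: "card (set T) = length T"
    using T(1) by (simp_all add: generic_sequence_def distinct_card)
  have TZ: "set T \<subseteq> ?Z \<inter> A" using c(1) TA by (auto simp: V_def vanishing_def)
  have "determined d A ?Z"
  proof (rule determined_if_unique_polynomial[OF net(2)[OF c]])
    fix g assume g: "g \<in> polys_le d" "\<forall>p\<in>?Z \<inter> A. bipoly_eval d g p = 0"
    then have "g \<in> V" using TZ unfolding V_def vanishing_def by blast
    moreover have "x \<in> ?Z \<inter> A" "y \<in> ?Z \<inter> A" using xy by (auto simp: X_def)
    ultimately show "\<exists>k. g = k *\<^sub>R c" using unique g(2) by blast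
  qed
  moreover have "card (?Z \<inter> A) + card (set T) + 2 \<le> 2 * n"
  proof (rule card_covered_by_two_pencils[OF H \<open>finite A\<close> _ _ TA net(1)[unfolded V_def]])
    show "x \<in> A - common_zeros d (vanishing d (polys_le d) (set T)) A"
      "y \<in> A - common_zeros d (vanishing d (polys_le d) (set T)) A"
      using xy(1,2) by (simp_all add: X_def V_def)
    show "?Z \<inter> A \<subseteq> common_zeros d (vanishing d (polys_le d) (insert x (set T))) A \<union>
      common_zeros d (vanishing d (polys_le d) (insert y (set T))) A"
    proof
      fix z assume z: "z \<in> ?Z \<inter> A"
      show "z \<in> common_zeros d (vanishing d (polys_le d) (insert x (set T))) A \<union>
        common_zeros d (vanishing d (polys_le d) (insert y (set T))) A"
      proof (cases "z \<in> X")
        case True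
        then show ?thesis
          using ordinary[OF True] z by (auto simp: V_def common_zeros_def vanishing_def)
      next
        case False
        then show ?thesis using z by (auto simp: X_def V_def common_zeros_def vanishing_def)
      qed
    qed
  qed (use assms(3) in simp_all)
  then have "card (?Z \<inter> A) + ((d + 2) choose 2) \<le> 2 * n + 1"
    using card_T T(2) by linarith
  then have "real (card (?Z \<inter> A)) \<le> real (2 * n + 1) - real ((d + 2) choose 2)"
    by (metis of_nat_add of_nat_le_iff le_diff_eq)
  ultimately show ?thesis unfolding ordinary_curves_def by simp
qed

lemma ordinary_curve_through_generic_sequence:
  assumes H: "at_most_one_curve_through d n A" and "finite A" "2 \<le> d"
    and not_on_curve: "\<not> (\<exists>C. is_curve d C \<and> A \<subseteq> C)"
    and T: "generic_sequence d A T" "length T + 3 = (d + 2) choose 2"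
  shows "\<exists>C \<in> ordinary_curves d (real (2 * n + 1) - real ((d + 2) choose 2)) A. set T \<subseteq> C"
proof -
  let ?V = "vanishing d (polys_le d) (set T)"
  define X where "X = A - common_zeros d ?V A"
  note net = net_of_maximal_generic_sequence[OF assms(3) T]
  have "finite X" using \<open>finite A\<close> by (simp add: X_def)
  have nondegenerate: "\<exists>c\<in>?V. bipoly_eval d c x \<noteq> 0" if "x \<in> X" for x
    using that by (auto simp: X_def common_zeros_def)
  have spanning: "\<exists>x\<in>X. bipoly_eval d c x \<noteq> 0" if "c \<in> ?V" "c \<noteq> 0" for c
  proof (rule ccontr)
    assume "\<not> ?thesis"
    then have "A \<subseteq> {p. bipoly_eval d c p = 0}" using that(1) by (auto simp: X_def common_zeros_def)
    then show False using not_on_curve is_curve_zero_set[OF net(2)[OF that]] by blast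
  qed
  obtain c x y where "c \<in> ?V" "c \<noteq> 0" "x \<in> X" "y \<in> X"
    "bipoly_eval d c x = 0" "bipoly_eval d c y = 0"
    "\<And>g. g \<in> ?V \<Longrightarrow> bipoly_eval d g x = 0 \<Longrightarrow> bipoly_eval d g y = 0 \<Longrightarrow> \<exists>k. g = k *\<^sub>R c"
    "\<And>z. z \<in> X \<Longrightarrow> bipoly_eval d c z = 0 \<Longrightarrow>
      (\<forall>g\<in>?V. bipoly_eval d g x = 0 \<longrightarrow> bipoly_eval d g z = 0) \<or>
      (\<forall>g\<in>?V. bipoly_eval d g y = 0 \<longrightarrow> bipoly_eval d g z = 0)"
    using sylvester_gallai_net[OF subspace_vanishing[OF subspace_polys_le] net(1) \<open>finite X\<close>
        linear_bipoly_eval nondegenerate spanning]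
    by blast
  from zero_set_in_ordinary_curves[OF H \<open>finite A\<close> assms(3) T this[unfolded X_def]]
  have "{p. bipoly_eval d c p = 0} \<in> ordinary_curves d (real (2 * n + 1) - real ((d + 2) choose 2)) A" .
  moreover have "set T \<subseteq> {p. bipoly_eval d c p = 0}" using \<open>c \<in> ?V\<close> by (auto simp: vanishing_def)
  ultimately show ?thesis by blast
qed

lemma finite_ordinary_curves:
  assumes "finite A"
  shows "finite (ordinary_curves d r A)"
proof -
  have "inj_on (\<lambda>C. C \<inter> A) (ordinary_curves d r A)"
    by (rule inj_onI) (auto simp: ordinary_curves_def determined_def)
  moreover have "(\<lambda>C. C \<inter> A) ` ordinary_curves d r A \<subseteq> Pow A" by auto
  ultimately show ?thesis using assms finite_imageD finite_subset by (metis finite_Pow_iff)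
qed

lemma ordinary_curves_double_counting:
  assumes H: "at_most_one_curve_through d n A" and "finite A" "2 \<le> d"
    and not_on_curve: "\<not> (\<exists>C. is_curve d C \<and> A \<subseteq> C)"
  defines "N \<equiv> (d + 2) choose 2"
  shows "(card A - 2 * (n - 1)) ^ (N - 3)
    \<le> card (ordinary_curves d (real (2 * n + 1) - real N) A) * (2 * n + 1 - N) ^ (N - 3)"
proof -
  let ?Ord = "ordinary_curves d (real (2 * n + 1) - real N) A"
  let ?G = "{xs. generic_sequence d A xs \<and> length xs = N - 3}"
  have "d + 1 \<le> N" unfolding N_def by (simp add: numeral_2_eq_2)
  have ext: "card A - 2 * (n - 1) \<le> card {p. generic_sequence d A (p # xs)}"
    if "generic_sequence d A xs" "length xs < N - 3" for xs
    using card_generic_extensions[OF H \<open>finite A\<close> _ that(1)] assms(3) that(2)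
    by (simp add: N_def)
  have "(card A - 2 * (n - 1)) ^ (N - 3) \<le> card ?G"
    by (rule card_lists_ge_power[OF \<open>finite A\<close> _ generic_sequence_Nil ext order_refl])
      (simp add: generic_sequence_def)
  also have "\<dots> \<le> card ((\<lambda>C. C \<inter> A) ` ?Ord) * (2 * n + 1 - N) ^ (N - 3)"
  proof (rule card_lists_in_some_le)
    show "finite ((\<lambda>C. C \<inter> A) ` ?Ord)" using finite_ordinary_curves[OF \<open>finite A\<close>] by blast
    show "finite C' \<and> card C' \<le> 2 * n + 1 - N" if "C' \<in> (\<lambda>C. C \<inter> A) ` ?Ord" for C'
      using that \<open>finite A\<close> by (auto simp: ordinary_curves_def)
    show "length xs = N - 3 \<and> (\<exists>C'\<in>(\<lambda>C. C \<inter> A) ` ?Ord. set xs \<subseteq> C')" if xs: "xs \<in> ?G" for xs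
    proof -
      have "length xs + 3 = (d + 2) choose 2" "generic_sequence d A xs"
        using xs \<open>d + 1 \<le> N\<close> assms(3) by (simp_all add: N_def)
      then obtain C where "C \<in> ?Ord" "set xs \<subseteq> C"
        using ordinary_curve_through_generic_sequence[OF H \<open>finite A\<close> assms(3) not_on_curve]
        unfolding N_def by blast
      moreover have "set xs \<subseteq> A" using xs by (simp add: generic_sequence_def)
      ultimately have "C \<inter> A \<in> (\<lambda>C. C \<inter> A) ` ?Ord" "set xs \<subseteq> C \<inter> A" by auto
      then show ?thesis using xs by blast
    qed
  qed
  also have "\<dots> \<le> card ?Ord * (2 * n + 1 - N) ^ (N - 3)"
    using finite_ordinary_curves[OF \<open>finite A\<close>] by (simp add: card_image_le)
  finally show ?thesis .
qed

lemma power_bound_from_count: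
  fixes m n K L c :: nat
  assumes "4 * n < m" "0 < K" "(m - 2 * (n - 1)) ^ L \<le> c * K ^ L"
  shows "1 / (2 * real K) ^ L * real m ^ L \<le> real c"
proof -
  have "real m / 2 \<le> real (m - 2 * (n - 1))" using assms(1) by (simp add: of_nat_diff)
  then have "(real m / 2) ^ L \<le> real (m - 2 * (n - 1)) ^ L" by (rule power_mono) simp
  also have "\<dots> \<le> real c * real K ^ L" using assms(3) by (metis of_nat_le_iff of_nat_mult of_nat_power)
  finally show ?thesis using assms(2) by (simp add: power_divide power_mult_distrib field_simps)
qed

theorem theorem7:
  fixes d n :: nat
  assumes "d \<ge> 3" and "n \<ge> ((d + 2) choose 2) - 1"
  shows "\<exists>c4 c5 :: real. c4 > 0 \<and> c5 > 0 \<and>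
    (\<forall>A :: (real \<times> real) set. finite A \<longrightarrow>
       (\<forall>B \<subseteq> A. card B = n \<longrightarrow>
          (\<forall>C1 C2. is_curve d C1 \<and> is_curve d C2 \<and> B \<subseteq> C1 \<and> B \<subseteq> C2 \<longrightarrow> C1 = C2)) \<longrightarrow>
       real (card A) > c4 \<longrightarrow>
       \<not> (\<exists>C. is_curve d C \<and> A \<subseteq> C) \<longrightarrow>
       real (card (ordinary_curves d (real (2 * n + 1) - real ((d + 2) choose 2)) A))
         \<ge> c5 * real (card A) ^ (((d + 2) choose 2) - 3))"
proof -
  define N K where "N = (d + 2) choose 2" and "K = 2 * n + 1 - N"
  have "d + 1 \<le> N" unfolding N_def by (simp add: numeral_2_eq_2)
  then have "0 < K" "0 < n" using assms by (simp_all add: K_def N_def)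
  show ?thesis
  proof (rule exI[of _ "real (4 * n)"], rule exI[of _ "1 / (2 * real K) ^ (N - 3)"],
      intro conjI allI impI)
    fix A :: "(real \<times> real) set"
    assume A: "finite A" "\<forall>B \<subseteq> A. card B = n \<longrightarrow>
        (\<forall>C1 C2. is_curve d C1 \<and> is_curve d C2 \<and> B \<subseteq> C1 \<and> B \<subseteq> C2 \<longrightarrow> C1 = C2)"
      "real (card A) > real (4 * n)" "\<not> (\<exists>C. is_curve d C \<and> A \<subseteq> C)"
    have "at_most_one_curve_through d n A"
      unfolding at_most_one_curve_through_def by (rule A(2))
    from ordinary_curves_double_counting[OF this A(1) _ A(4)] assms(1)
    have "(card A - 2 * (n - 1)) ^ (N - 3)
        \<le> card (ordinary_curves d (real (2 * n + 1) - real N) A) * K ^ (N - 3)"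
      by (simp add: N_def K_def)
    moreover have "4 * n < card A" using A(3) by linarith
    ultimately show "1 / (2 * real K) ^ (N - 3) * real (card A) ^ (((d + 2) choose 2) - 3)
        \<le> real (card (ordinary_curves d (real (2 * n + 1) - real ((d + 2) choose 2)) A))"
      using power_bound_from_count[OF _ \<open>0 < K\<close>] unfolding N_def by blast
  qed (use \<open>0 < K\<close> \<open>0 < n\<close> in simp_all)
qed

end
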